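(* Let $A\in\mathbb{R}^{n\times n}$. (a) For every integer $k\ge0$, $(A\,\underline{\otimes}\, I)^k = (I\,\underline{\otimes}\, A)^k = \frac{1}{2^k}\sum_{i=0}^k\binom{k}{i}A^{k-i}\,\underline{\otimes}\, A^i$. (b) $\exp(A\,\underline{\oplus}\, A) = \exp(A)\,\underline{\otimes}\,\exp(A)$. (c) In general $\exp(A\,\underline{\oplus}\, B)\ne\exp(A)\,\underline{\otimes}\,\exp(B)$; i.e., there exist $n$ and $A,B\in\mathbb{R}^{n\times n}$ with $\exp(A\,\underline{\oplus}\, B)\ne\exp(A)\,\underline{\otimes}\,\exp(B)$.
   Context: Let $\underline{n}=n(n+1)/2$, $\operatorname{vec}$ column-stacking vectorization, $\otimes$ the Kronecker product, $e_1,\dots,e_n$ the standard basis. Enumerate pairs $(r,c)$, $1\le r\le c\le n$, in the order $(1,1),\dots,(1,n),(2,2),\dots,(2,n),\dots,(n,n)$ as $(r(\ell),c(\ell))$, $\ell=1,\dots,\underline{n}$; set $E_\ell=e_{r(\ell)}e_{r(\ell)}^T$ if $r(\ell)=c(\ell)$ and $E_\ell=\frac{\sqrt2}{2}(e_{r(\ell)}e_{c(\ell)}^T+e_{c(\ell)}e_{r(\ell)}^T)$ otherwise; $W_n\in\mathbb{R}^{\underline{n}\times n^2}$ has $\ell$-th row $\operatorname{vec}(E_\ell)^T$. The symmetric Kronecker product of $A,B\in\mathbb{R}^{n\times n}$ is $A\,\underline{\otimes}\, B = W_n(A\otimes B)W_n^T\in\mathbb{R}^{\underline{n}\times\underline{n}}$,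 and the symmetric Kronecker sum is $A\,\underline{\oplus}\, B = A\,\underline{\otimes}\, I + I\,\underline{\otimes}\, B$. $\exp$ is the matrix exponential. *)

theory Defs
  imports Complex_Main "Jordan_Normal_Form.Matrix"
begin

definition tri :: "nat \<Rightarrow> nat" where
  "tri n = n * (n + 1) div 2"

definition sym_pairs :: "nat \<Rightarrow> (nat \<times> nat) list" where
  "sym_pairs n = concat (map (\<lambda>r. map (\<lambda>c. (r, c)) [r..<n]) [0..<n])"

definition sym_basis :: "nat \<Rightarrow> nat \<Rightarrow> real mat" where
  "sym_basis n l = (let (r, c) = sym_pairs n ! l in
     if r = c then mat n n (\<lambda>(a, b). if a = r \<and> b = r then 1 else 0)
     else mat n n (\<lambda>(a, b). (sqrt 2 / 2) *
        ((if a = r \<and> b = c then 1 else 0) + (if a = c \<and> b = r then 1 else 0))))"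

(* column-stacking vectorization *)
definition vecm :: "'a mat \<Rightarrow> 'a vec" where
  "vecm M = vec (dim_row M * dim_col M) (\<lambda>m. M $$ (m mod dim_row M, m div dim_row M))"

definition Wmat :: "nat \<Rightarrow> real mat" where
  "Wmat n = mat_of_rows (n * n) (map (\<lambda>l. vecm (sym_basis n l)) [0..<tri n])"

definition kron :: "'a :: times mat \<Rightarrow> 'a mat \<Rightarrow> 'a mat" where
  "kron A B = mat (dim_row A * dim_row B) (dim_col A * dim_col B)
     (\<lambda>(i, j). A $$ (i div dim_row B, j div dim_col B) * B $$ (i mod dim_row B, j mod dim_col B))"

definition skron :: "real mat \<Rightarrow> real mat \<Rightarrow> real mat" where
  "skron A B = Wmat (dim_row A) * kron A B * transpose_mat (Wmat (dim_row A))"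

definition ssum :: "real mat \<Rightarrow> real mat \<Rightarrow> real mat" where
  "ssum A B = skron A (1\<^sub>m (dim_row A)) + skron (1\<^sub>m (dim_row A)) B"

definition mexp :: "real mat \<Rightarrow> real mat" where
  "mexp M = mat (dim_row M) (dim_col M) (\<lambda>(i, j). \<Sum>k. (M ^\<^sub>m k) $$ (i, j) / fact k)"

definition msum :: "nat \<Rightarrow> ('b \<Rightarrow> real mat) \<Rightarrow> 'b set \<Rightarrow> real mat" where
  "msum d f S = mat d d (\<lambda>(i, j). \<Sum>x\<in>S. f x $$ (i, j))"

end

theory Submission
  imports Defs
begin

text \<open>
  Entry (l, l') of W (A \<otimes> B) W^T is the Frobenius inner product of E_l with B E_l' A^T,
  because (A \<otimes> B) vec M = vec (B M A^T). The E_l form an orthonormal basis of the symmetric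
  matrices, so W^T W is the symmetrisation Z \<mapsto> (Z + Z^T) / 2. Inserting it between two
  factors gives the mixed product rule
  (A \<otimes>s B) (C \<otimes>s D) = (AC \<otimes>s BD + AD \<otimes>s BC) / 2.
  For C = I and D = A this is Pascal's recursion for the powers of I \<otimes>s A, which is (a).
  Since A \<oplus>s A = 2 (I \<otimes>s A), part (a) turns exp (A \<oplus>s A) into the Cauchy product of the
  exponential series of A with itself, inserted into the bilinear map \<otimes>s; this is (b).
  For (c) take N with N^2 = 0 and B = 0. Then N \<oplus>s 0 = N/2 \<oplus>s N/2, so by (b)
  exp (N \<oplus>s 0) = (I + N/2) \<otimes>s (I + N/2), which differs from exp N \<otimes>s exp 0 = (I + N) \<otimes>s I
  by (N \<otimes>s N) / 4 \<noteq> 0.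
\<close>

section \<open>An orthonormal basis of the symmetric matrices\<close>

lemma set_sym_pairs: "set (sym_pairs n) = {(r, c). r \<le> c \<and> c < n}"
  by (force simp: sym_pairs_def)

lemma distinct_sym_pairs: "distinct (sym_pairs n)"
  unfolding sym_pairs_def
  by (auto intro!: distinct_concat simp: distinct_map inj_on_def upt_conv_Cons dest!: arg_cong[of _ _ hd])

lemma length_sym_pairs: "length (sym_pairs n) = tri n"
proof -
  have "length (sym_pairs n) = (\<Sum>r<n. n - r)"
    by (simp add: sym_pairs_def length_concat sum_list_sum_nth atLeast0LessThan comp_def)
  also have "\<dots> = (\<Sum>r<n. Suc r)"
    by (rule sum.reindex_bij_witness[of _ "\<lambda>r. n - Suc r" "\<lambda>r. n - Suc r"]) auto
  also have "\<dots> = tri n"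
    by (induction n) (auto simp: tri_def)
  finally show ?thesis .
qed

lemma sum_sym_pairs: "(\<Sum>l<tri n. f (sym_pairs n ! l)) = (\<Sum>p\<in>set (sym_pairs n). f p)"
  using sum_list_distinct_conv_sum_set[OF distinct_sym_pairs, of f n]
  by (simp add: sum_list_sum_nth length_sym_pairs atLeast0LessThan)

lemma sym_pairs_nth:
  assumes "l < tri n"
  obtains r c where "sym_pairs n ! l = (r, c)" "r \<le> c" "c < n"
  using nth_mem[of l "sym_pairs n"] assms by (auto simp: length_sym_pairs set_sym_pairs)

lemma sym_pairs_nth_eq_iff:
  "l < tri n \<Longrightarrow> l' < tri n \<Longrightarrow> sym_pairs n ! l = sym_pairs n ! l' \<longleftrightarrow> l = l'"
  using nth_eq_iff_index_eq[OF distinct_sym_pairs] by (simp add: length_sym_pairs)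

lemma sym_basis_carrier: "sym_basis n l \<in> carrier_mat n n"
  by (simp add: sym_basis_def split: prod.split)

lemma transpose_sym_basis: "transpose_mat (sym_basis n l) = sym_basis n l"
  by (rule eq_matI) (auto simp: sym_basis_def split: prod.split)

lemma sym_basis_entry:
  assumes "l < tri n" "i < n" "j < n"
  shows "sym_basis n l $$ (i, j) =
    (if sym_pairs n ! l = (min i j, max i j) then if i = j then 1 else sqrt 2 / 2 else 0)"
proof -
  obtain r c where "sym_pairs n ! l = (r, c)" "r \<le> c" using sym_pairs_nth[OF assms(1)] .
  then show ?thesis using assms(2,3) by (auto simp: sym_basis_def min_def max_def)
qed

definition frob_inner :: "nat \<Rightarrow> real mat \<Rightarrow> real mat \<Rightarrow> real" where
  "frob_inner n P Q = (\<Sum>i<n. \<Sum>j<n. P $$ (i, j) * Q $$ (i, j))"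

lemma sqrt2_half_squared: "sqrt 2 / 2 * (sqrt 2 / 2) = (1 / 2 :: real)"
proof -
  have "sqrt 2 / 2 * (sqrt 2 / 2) = (sqrt 2 * sqrt 2) / (4 :: real)" by simp
  then show ?thesis by simp
qed

lemma sum_square_delta:
  fixes f :: "nat \<Rightarrow> nat \<Rightarrow> real"
  assumes "r < n" "c < n"
  shows "(\<Sum>i<n. \<Sum>j<n. if i = r \<and> j = c then f i j else 0) = f r c"
proof -
  have "(\<Sum>j<n. if i = r \<and> j = c then f i j else 0) = (if i = r then f i c else 0)" for i
    using assms by (cases "i = r") (simp_all add: sum.delta)
  then show ?thesis using assms by (simp add: sum.delta)
qed

lemma min_max_eq_iff:
  "(min i j, max i j) = (min a b, max a b) \<longleftrightarrow> (i = a \<and> j = b) \<or> (i = b \<and> j = a)"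
  for i j a b :: nat
  by (cases "i \<le> j"; cases "a \<le> b") (auto simp: min_def max_def)

lemma sym_basis_orthonormal:
  assumes "l < tri n" "l' < tri n"
  shows "frob_inner n (sym_basis n l) (sym_basis n l') = (if l = l' then 1 else 0)"
proof (cases "l = l'")
  case True
  obtain r c where rc: "sym_pairs n ! l = (r, c)" "r \<le> c" "c < n"
    using sym_pairs_nth[OF assms(1)] .
  let ?f = "\<lambda>i j. if i = j then 1 else 1 / 2 :: real"
  let ?g = "\<lambda>i j. if r = c then 0 else ?f i j"
  have "sym_basis n l $$ (i, j) * sym_basis n l $$ (i, j) =
      (if i = r \<and> j = c then ?f i j else 0) + (if i = c \<and> j = r then ?g i j else 0)"
    if "i < n" "j < n" for i j
  proof -
    have "(min i j, max i j) = (r, c) \<longleftrightarrow> (i = r \<and> j = c) \<or> (i = c \<and> j = r)"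
      using min_max_eq_iff[of i j r c] rc(2) by (simp add: min_def max_def)
    then show ?thesis
      using that assms(1) rc(1)
      by (cases "i = r"; cases "j = c"; cases "i = c"; cases "j = r")
        (simp_all add: sym_basis_entry sqrt2_half_squared)
  qed
  then have "frob_inner n (sym_basis n l) (sym_basis n l) =
      (\<Sum>i<n. \<Sum>j<n. if i = r \<and> j = c then ?f i j else 0) +
      (\<Sum>i<n. \<Sum>j<n. if i = c \<and> j = r then ?g i j else 0)"
    unfolding frob_inner_def by (simp add: sum.distrib)
  also have "\<dots> = 1"
    using rc by (simp add: sum_square_delta)
  finally show ?thesis using True by simp
next
  case False
  then show ?thesis
    using assms sym_pairs_nth_eq_iff[OF assms]
    by (auto simp: frob_inner_def sym_basis_entry intro!: sum.neutral)
qed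

lemma sum_sym_basis_outer:
  assumes "i < n" "j < n" "a < n" "b < n"
  shows "(\<Sum>l<tri n. sym_basis n l $$ (i, j) * sym_basis n l $$ (a, b)) =
    ((if i = a \<and> j = b then 1 else 0) + (if i = b \<and> j = a then 1 else 0)) / 2"
proof -
  let ?w = "\<lambda>i j. if i = j then 1 else sqrt 2 / 2 :: real"
  let ?g = "if (min i j, max i j) = (min a b, max a b) then ?w i j * ?w a b else 0"
  have "(\<Sum>l<tri n. sym_basis n l $$ (i, j) * sym_basis n l $$ (a, b)) =
      (\<Sum>l<tri n. if sym_pairs n ! l = (min i j, max i j) then ?g else 0)"
    using assms by (intro sum.cong refl) (simp add: sym_basis_entry)
  also have "\<dots> = (\<Sum>p\<in>set (sym_pairs n). if p = (min i j, max i j) then ?g else 0)"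
    by (rule sum_sym_pairs)
  also have "\<dots> = ?g"
    using assms by (simp only: sum.delta[OF finite_set]) (simp add: set_sym_pairs)
  also have "\<dots> = ((if i = a \<and> j = b then 1 else 0) + (if i = b \<and> j = a then 1 else 0)) / 2"
    unfolding min_max_eq_iff
    by (cases "i = a"; cases "j = b"; cases "i = b"; cases "j = a"; cases "i = j")
      (simp_all add: sqrt2_half_squared)
  finally show ?thesis .
qed

section \<open>Entries of the symmetric Kronecker product\<close>

lemma index_mult_mat_sum:
  assumes "A \<in> carrier_mat m p" "B \<in> carrier_mat p q" "i < m" "j < q"
  shows "(A * B) $$ (i, j) = (\<Sum>k<p. A $$ (i, k) * B $$ (k, j))"
  using assms by (simp add: scalar_prod_def atLeast0LessThan)

lemma index_mult3_mat_sum: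
  assumes "P \<in> carrier_mat n n" "M \<in> carrier_mat n n" "Q \<in> carrier_mat n n" "a < n" "b < n"
  shows "(P * M * Q) $$ (a, b) = (\<Sum>c<n. \<Sum>d<n. P $$ (a, c) * M $$ (c, d) * Q $$ (d, b))"
proof -
  have "(P * M * Q) $$ (a, b) = (\<Sum>d<n. (P * M) $$ (a, d) * Q $$ (d, b))"
    using assms by (intro index_mult_mat_sum[of _ n n]) auto
  also have "\<dots> = (\<Sum>d<n. (\<Sum>c<n. P $$ (a, c) * M $$ (c, d)) * Q $$ (d, b))"
    using assms by (intro sum.cong refl) (subst index_mult_mat_sum[of P n n M n], auto)
  also have "\<dots> = (\<Sum>d<n. \<Sum>c<n. P $$ (a, c) * M $$ (c, d) * Q $$ (d, b))"
    by (simp add: sum_distrib_right)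
  also have "\<dots> = (\<Sum>c<n. \<Sum>d<n. P $$ (a, c) * M $$ (c, d) * Q $$ (d, b))"
    by (rule sum.swap)
  finally show ?thesis .
qed

lemma frob_inner_mult3:
  assumes "P \<in> carrier_mat n n" "M \<in> carrier_mat n n" "Q \<in> carrier_mat n n"
  shows "frob_inner n E (P * M * Q) =
    (\<Sum>a<n. \<Sum>b<n. \<Sum>c<n. \<Sum>d<n. E $$ (a, b) * P $$ (a, c) * M $$ (c, d) * Q $$ (d, b))"
proof -
  have "frob_inner n E (P * M * Q) =
      (\<Sum>a<n. \<Sum>b<n. E $$ (a, b) * (\<Sum>c<n. \<Sum>d<n. P $$ (a, c) * M $$ (c, d) * Q $$ (d, b)))"
    unfolding frob_inner_def using assms by (intro sum.cong refl) (simp only: index_mult3_mat_sum lessThan_iff)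
  then show ?thesis
    by (simp only: sum_distrib_left mult.assoc)
qed

lemma frob_inner_transpose:
  assumes "transpose_mat E = E" "E \<in> carrier_mat n n" "Z \<in> carrier_mat n n"
  shows "frob_inner n E (transpose_mat Z) = frob_inner n E Z"
proof -
  have "frob_inner n E (transpose_mat Z) = (\<Sum>i<n. \<Sum>j<n. E $$ (j, i) * Z $$ (j, i))"
    unfolding frob_inner_def using assms
    by (intro sum.cong refl) (metis index_transpose_mat(1) carrier_matD lessThan_iff)
  also have "\<dots> = frob_inner n E Z"
    unfolding frob_inner_def by (rule sum.swap)
  finally show ?thesis .
qed

lemma sum_square_index:
  fixes g :: "nat \<Rightarrow> nat \<Rightarrow> 'a :: comm_monoid_add"
  shows "(\<Sum>p<n * n. g (p mod n) (p div n)) = (\<Sum>j<n. \<Sum>i<n. g i j)"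
proof -
  have "(\<Sum>p<n * n. g (p mod n) (p div n)) = (\<Sum>j<n. \<Sum>p\<in>{j * n..<j * n + n}. g (p mod n) (p div n))"
    by (rule sum.nat_group[symmetric])
  also have "\<dots> = (\<Sum>j<n. \<Sum>i<n. g i j)"
  proof (rule sum.cong[OF refl])
    fix j
    have "(\<Sum>p\<in>{j * n..<j * n + n}. g (p mod n) (p div n)) =
        (\<Sum>i<n. g ((i + j * n) mod n) ((i + j * n) div n))"
      by (rule sum.reindex_bij_witness[of _ "\<lambda>i. i + j * n" "\<lambda>p. p - j * n"]) auto
    also have "\<dots> = (\<Sum>i<n. g i j)"
      by (intro sum.cong) auto
    finally show "(\<Sum>p\<in>{j * n..<j * n + n}. g (p mod n) (p div n)) = (\<Sum>i<n. g i j)" .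
  qed
  finally show ?thesis .
qed

lemma kron_mult_vecm:
  fixes X Y M :: "'a :: comm_semiring_1 mat"
  assumes "X \<in> carrier_mat n n" "Y \<in> carrier_mat n n" "M \<in> carrier_mat n n" "p < n * n"
  shows "(\<Sum>q<n * n. kron X Y $$ (p, q) * M $$ (q mod n, q div n)) =
    (Y * M * transpose_mat X) $$ (p mod n, p div n)"
proof -
  have "0 < n"
    using assms(4) by (cases n) auto
  then have p: "p mod n < n" "p div n < n"
    using assms(4) by (auto simp: less_mult_imp_div_less)
  have "(\<Sum>q<n * n. kron X Y $$ (p, q) * M $$ (q mod n, q div n)) =
      (\<Sum>q<n * n. X $$ (p div n, q div n) * Y $$ (p mod n, q mod n) * M $$ (q mod n, q div n))"
    using assms by (intro sum.cong refl) (simp add: kron_def)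
  also have "\<dots> = (\<Sum>d<n. \<Sum>c<n. X $$ (p div n, d) * Y $$ (p mod n, c) * M $$ (c, d))"
    using sum_square_index[of "\<lambda>c d. X $$ (p div n, d) * Y $$ (p mod n, c) * M $$ (c, d)" n]
    by simp
  also have "\<dots> = (\<Sum>c<n. \<Sum>d<n. Y $$ (p mod n, c) * M $$ (c, d) * transpose_mat X $$ (d, p div n))"
    using assms p by (subst sum.swap) (intro sum.cong refl, simp add: mult_ac)
  also have "\<dots> = (Y * M * transpose_mat X) $$ (p mod n, p div n)"
    using assms p by (simp only: index_mult3_mat_sum transpose_carrier_mat)
  finally show ?thesis .
qed

lemma Wmat_carrier: "Wmat n \<in> carrier_mat (tri n) (n * n)"
  unfolding Wmat_def by (simp add: mat_of_rows_def)

lemma Wmat_entry: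
  "l < tri n \<Longrightarrow> p < n * n \<Longrightarrow> Wmat n $$ (l, p) = sym_basis n l $$ (p mod n, p div n)"
  using sym_basis_carrier[of n l] by (simp add: Wmat_def mat_of_rows_index vecm_def)

lemma skron_dim:
  "dim_row (skron X Y) = tri (dim_row X)" "dim_col (skron X Y) = tri (dim_row X)"
  unfolding skron_def using carrier_matD[OF Wmat_carrier[of "dim_row X"]] by simp_all

lemma skron_carrier: "X \<in> carrier_mat n n \<Longrightarrow> skron X Y \<in> carrier_mat (tri n) (tri n)"
  by (intro carrier_matI) (simp_all add: skron_dim carrier_matD(1))

lemma skron_entry:
  assumes X: "X \<in> carrier_mat n n" and Y: "Y \<in> carrier_mat n n"
    and l: "l < tri n" and l': "l' < tri n"
  shows "skron X Y $$ (l, l') = frob_inner n (sym_basis n l) (Y * sym_basis n l' * transpose_mat X)"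
proof -
  let ?W = "Wmat n" and ?K = "kron X Y" and ?Z = "Y * sym_basis n l' * transpose_mat X"
  have W: "?W \<in> carrier_mat (tri n) (n * n)" and K: "?K \<in> carrier_mat (n * n) (n * n)"
    using X Y by (auto simp: Wmat_carrier kron_def)
  have "skron X Y $$ (l, l') = (?W * (?K * transpose_mat ?W)) $$ (l, l')"
    unfolding skron_def using X W K by (simp add: assoc_mult_mat[OF W K])
  also have "\<dots> = (\<Sum>p<n * n. ?W $$ (l, p) * (?K * transpose_mat ?W) $$ (p, l'))"
    using W K l l' by (intro index_mult_mat_sum[of _ "tri n" "n * n" _ "tri n"]) auto
  also have "\<dots> = (\<Sum>p<n * n. sym_basis n l $$ (p mod n, p div n) * ?Z $$ (p mod n, p div n))"
  proof (intro sum.cong refl)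
    fix p assume "p \<in> {..<n * n}"
    then have p: "p < n * n" by simp
    have "(?K * transpose_mat ?W) $$ (p, l') = (\<Sum>q<n * n. ?K $$ (p, q) * transpose_mat ?W $$ (q, l'))"
      using W K p l' by (intro index_mult_mat_sum[of _ "n * n" "n * n" _ "tri n"]) auto
    also have "\<dots> = (\<Sum>q<n * n. ?K $$ (p, q) * sym_basis n l' $$ (q mod n, q div n))"
      using W l' by (intro sum.cong refl) (simp add: Wmat_entry)
    also have "\<dots> = ?Z $$ (p mod n, p div n)"
      by (rule kron_mult_vecm[OF X Y sym_basis_carrier p])
    finally show "?W $$ (l, p) * (?K * transpose_mat ?W) $$ (p, l') =
        sym_basis n l $$ (p mod n, p div n) * ?Z $$ (p mod n, p div n)"
      by (simp only: Wmat_entry[OF l p])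
  qed
  also have "\<dots> = (\<Sum>j<n. \<Sum>i<n. sym_basis n l $$ (i, j) * ?Z $$ (i, j))"
    by (rule sum_square_index[of "\<lambda>i j. sym_basis n l $$ (i, j) * ?Z $$ (i, j)" n])
  also have "\<dots> = frob_inner n (sym_basis n l) ?Z"
    unfolding frob_inner_def by (rule sum.swap)
  finally show ?thesis .
qed

lemma skron_entry_sum:
  assumes "X \<in> carrier_mat n n" "Y \<in> carrier_mat n n" "l < tri n" "l' < tri n"
  shows "skron X Y $$ (l, l') = (\<Sum>a<n. \<Sum>b<n. \<Sum>c<n. \<Sum>d<n.
    sym_basis n l $$ (a, b) * Y $$ (a, c) * sym_basis n l' $$ (c, d) * X $$ (b, d))"
  using assms sym_basis_carrier by (simp add: skron_entry frob_inner_mult3)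

lemma skron_commute:
  assumes X: "X \<in> carrier_mat n n" and Y: "Y \<in> carrier_mat n n"
  shows "skron X Y = skron Y X"
proof (rule eq_matI)
  fix l l' assume "l < dim_row (skron Y X)" "l' < dim_col (skron Y X)"
  then have l: "l < tri n" "l' < tri n"
    using skron_carrier[OF Y, of X] by auto
  have E: "sym_basis n l' \<in> carrier_mat n n" by (rule sym_basis_carrier)
  have "transpose_mat (Y * sym_basis n l' * transpose_mat X) = X * sym_basis n l' * transpose_mat Y"
    using X Y E by (simp add: transpose_mult[of _ n n _ n] transpose_sym_basis assoc_mult_mat[of _ n n _ n _ n])
  then show "skron X Y $$ (l, l') = skron Y X $$ (l, l')"
    using X Y E l
    by (metis skron_entry frob_inner_transpose transpose_sym_basis sym_basis_carrier
        mult_carrier_mat transpose_carrier_mat)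
qed (use skron_carrier[OF X, of Y] skron_carrier[OF Y, of X] in auto)

lemma skron_one_one: "skron (1\<^sub>m n) (1\<^sub>m n) = 1\<^sub>m (tri n)"
proof (rule eq_matI)
  fix l l' assume "l < dim_row (1\<^sub>m (tri n) :: real mat)" "l' < dim_col (1\<^sub>m (tri n) :: real mat)"
  then have "l < tri n" "l' < tri n" by auto
  then show "skron (1\<^sub>m n) (1\<^sub>m n) $$ (l, l') = 1\<^sub>m (tri n) $$ (l, l')"
    using sym_basis_carrier[of n l'] by (simp add: skron_entry[of _ n] sym_basis_orthonormal)
qed (use skron_carrier[of "1\<^sub>m n" n "1\<^sub>m n"] in auto)

lemma skron_smult_right:
  assumes X: "X \<in> carrier_mat n n" and Y: "Y \<in> carrier_mat n n"
  shows "skron X (c \<cdot>\<^sub>m Y) = c \<cdot>\<^sub>m skron X Y"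
proof (rule eq_matI)
  fix l l' assume "l < dim_row (c \<cdot>\<^sub>m skron X Y)" "l' < dim_col (c \<cdot>\<^sub>m skron X Y)"
  then have "l < tri n" "l' < tri n"
    using skron_carrier[OF X, of Y] by auto
  then show "skron X (c \<cdot>\<^sub>m Y) $$ (l, l') = (c \<cdot>\<^sub>m skron X Y) $$ (l, l')"
    using X Y skron_carrier[OF X, of Y]
    by (simp add: skron_entry_sum[of _ n] sum_distrib_left mult_ac)
qed (use skron_carrier[OF X, of Y] skron_carrier[OF X, of "c \<cdot>\<^sub>m Y"] in auto)

lemma skron_zero_right:
  assumes X: "X \<in> carrier_mat n n"
  shows "skron X (0\<^sub>m n n) = 0\<^sub>m (tri n) (tri n)"
proof (rule eq_matI)
  fix l l' assume "l < dim_row (0\<^sub>m (tri n) (tri n) :: real mat)" "l' < dim_col (0\<^sub>m (tri n) (tri n) :: real mat)"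
  then show "skron X (0\<^sub>m n n) $$ (l, l') = 0\<^sub>m (tri n) (tri n) $$ (l, l')"
    using X by (simp add: skron_entry_sum[of _ n])
qed (use skron_carrier[OF X, of "0\<^sub>m n n"] in auto)

section \<open>The mixed product rule\<close>

lemma sum_sym_basis_frob_inner:
  assumes "c < n" "d < n" "Z \<in> carrier_mat n n"
  shows "(\<Sum>l<tri n. sym_basis n l $$ (c, d) * frob_inner n (sym_basis n l) Z) =
    (Z $$ (c, d) + Z $$ (d, c)) / 2"
proof -
  have "(\<Sum>l<tri n. sym_basis n l $$ (c, d) * frob_inner n (sym_basis n l) Z) =
      (\<Sum>i<n. \<Sum>j<n. (\<Sum>l<tri n. sym_basis n l $$ (c, d) * sym_basis n l $$ (i, j)) * Z $$ (i, j))"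
    unfolding frob_inner_def
    by (simp add: sum_distrib_left sum_distrib_right mult.assoc sum.swap[of _ "{..<tri n}"])
  also have "\<dots> = (\<Sum>i<n. \<Sum>j<n. if i = c \<and> j = d then Z $$ (i, j) / 2 else 0) +
      (\<Sum>i<n. \<Sum>j<n. if i = d \<and> j = c then Z $$ (i, j) / 2 else 0)"
  proof -
    have "(\<Sum>l<tri n. sym_basis n l $$ (c, d) * sym_basis n l $$ (i, j)) * Z $$ (i, j) =
        (if i = c \<and> j = d then Z $$ (i, j) / 2 else 0) + (if i = d \<and> j = c then Z $$ (i, j) / 2 else 0)"
      if "i < n" "j < n" for i j
      using assms that
      by (cases "i = c"; cases "j = d"; cases "i = d"; cases "j = c") (simp_all add: sum_sym_basis_outer)
    then show ?thesis
      by (simp add: sum.distrib)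
  qed
  also have "\<dots> = (Z $$ (c, d) + Z $$ (d, c)) / 2"
    using assms by (simp add: sum_square_delta add_divide_distrib)
  finally show ?thesis .
qed

lemma sum_frob_inner_sym_basis:
  assumes P: "P \<in> carrier_mat n n" and Q: "Q \<in> carrier_mat n n" and Z: "Z \<in> carrier_mat n n"
  shows "(\<Sum>l<tri n. frob_inner n E (P * sym_basis n l * Q) * frob_inner n (sym_basis n l) Z) =
    (frob_inner n E (P * Z * Q) + frob_inner n E (P * transpose_mat Z * Q)) / 2"
proof -
  have "(\<Sum>l<tri n. frob_inner n E (P * sym_basis n l * Q) * frob_inner n (sym_basis n l) Z) =
      (\<Sum>a<n. \<Sum>b<n. \<Sum>c<n. \<Sum>d<n. E $$ (a, b) * P $$ (a, c) * Q $$ (d, b) *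
        (\<Sum>l<tri n. sym_basis n l $$ (c, d) * frob_inner n (sym_basis n l) Z))"
    using P Q sym_basis_carrier
    by (simp add: frob_inner_mult3 sum_distrib_left sum_distrib_right sum.swap[of _ "{..<tri n}"] mult_ac)
  also have "\<dots> = (\<Sum>a<n. \<Sum>b<n. \<Sum>c<n. \<Sum>d<n.
      (E $$ (a, b) * P $$ (a, c) * Z $$ (c, d) * Q $$ (d, b) +
       E $$ (a, b) * P $$ (a, c) * transpose_mat Z $$ (c, d) * Q $$ (d, b)) / 2)"
    using Z by (intro sum.cong refl) (simp only: lessThan_iff sum_sym_basis_frob_inner, simp add: field_simps)
  also have "\<dots> = ((\<Sum>a<n. \<Sum>b<n. \<Sum>c<n. \<Sum>d<n. E $$ (a, b) * P $$ (a, c) * Z $$ (c, d) * Q $$ (d, b)) +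
      (\<Sum>a<n. \<Sum>b<n. \<Sum>c<n. \<Sum>d<n.
        E $$ (a, b) * P $$ (a, c) * transpose_mat Z $$ (c, d) * Q $$ (d, b))) / 2"
    by (simp only: add_divide_distrib sum.distrib sum_divide_distrib)
  also have "\<dots> = (frob_inner n E (P * Z * Q) + frob_inner n E (P * transpose_mat Z * Q)) / 2"
    using P Q Z by (simp only: frob_inner_mult3 transpose_carrier_mat)
  finally show ?thesis .
qed

lemma skron_mult:
  assumes X: "X \<in> carrier_mat n n" and Y: "Y \<in> carrier_mat n n"
    and U: "U \<in> carrier_mat n n" and V: "V \<in> carrier_mat n n"
  shows "skron X Y * skron U V = (1 / 2) \<cdot>\<^sub>m (skron (X * U) (Y * V) + skron (X * V) (Y * U))"
proof (rule eq_matI)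
  have XU: "X * U \<in> carrier_mat n n" and XV: "X * V \<in> carrier_mat n n"
    using X U V by auto
  fix l l' assume "l < dim_row ((1 / 2) \<cdot>\<^sub>m (skron (X * U) (Y * V) + skron (X * V) (Y * U)))"
    "l' < dim_col ((1 / 2) \<cdot>\<^sub>m (skron (X * U) (Y * V) + skron (X * V) (Y * U)))"
  then have l: "l < tri n" "l' < tri n"
    using skron_carrier[OF XU, of "Y * V"] skron_carrier[OF XV, of "Y * U"] by auto
  let ?E = "sym_basis n l'"
  let ?Z = "V * ?E * transpose_mat U"
  have E: "?E \<in> carrier_mat n n" by (rule sym_basis_carrier)
  have "(skron X Y * skron U V) $$ (l, l') = (\<Sum>k<tri n. skron X Y $$ (l, k) * skron U V $$ (k, l'))"
    using skron_carrier[OF X, of Y] skron_carrier[OF U, of V] l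
    by (intro index_mult_mat_sum[of _ "tri n" "tri n" _ "tri n"]) auto
  also have "\<dots> = (\<Sum>k<tri n. frob_inner n (sym_basis n l) (Y * sym_basis n k * transpose_mat X) *
      frob_inner n (sym_basis n k) ?Z)"
    using X Y U V l by (intro sum.cong refl) (simp add: skron_entry)
  also have "\<dots> = (frob_inner n (sym_basis n l) (Y * ?Z * transpose_mat X) +
      frob_inner n (sym_basis n l) (Y * transpose_mat ?Z * transpose_mat X)) / 2"
    using X Y U V E by (intro sum_frob_inner_sym_basis) auto
  also have "Y * ?Z * transpose_mat X = (Y * V) * ?E * transpose_mat (X * U)"
    using X Y U V E by (simp add: assoc_mult_mat[of _ n n _ n _ n] transpose_mult[of _ n n _ n])
  also have "Y * transpose_mat ?Z * transpose_mat X = (Y * U) * ?E * transpose_mat (X * V)"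
    using X Y U V E
    by (simp add: assoc_mult_mat[of _ n n _ n _ n] transpose_mult[of _ n n _ n] transpose_sym_basis)
  finally show "(skron X Y * skron U V) $$ (l, l') =
      ((1 / 2) \<cdot>\<^sub>m (skron (X * U) (Y * V) + skron (X * V) (Y * U))) $$ (l, l')"
    using XU XV Y U V l skron_carrier[OF XU, of "Y * V"] skron_carrier[OF XV, of "Y * U"]
    by (simp add: skron_entry[of _ n])
qed (use X U V skron_carrier[OF X, of Y] skron_carrier[OF U, of V] skron_carrier[of "X * U" n "Y * V"]
    skron_carrier[of "X * V" n "Y * U"] in auto)

section \<open>Powers and the exponential\<close>

lemma binomial_sum_Suc:
  fixes g :: "nat \<Rightarrow> nat \<Rightarrow> 'a :: comm_semiring_1"
  shows "(\<Sum>i\<le>Suc k. of_nat (Suc k choose i) * g i (Suc k - i)) =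
    (\<Sum>i\<le>k. of_nat (k choose i) * (g (Suc i) (k - i) + g i (Suc k - i)))"
proof -
  have shift: "g 0 (Suc k) + (\<Sum>i\<le>k. of_nat (k choose Suc i) * g (Suc i) (k - i)) =
      (\<Sum>i\<le>k. of_nat (k choose i) * g i (Suc k - i))"
  proof -
    have "g 0 (Suc k) + (\<Sum>i\<le>k. of_nat (k choose Suc i) * g (Suc i) (k - i)) =
        (\<Sum>i\<le>Suc k. of_nat (k choose i) * g i (Suc k - i))"
      by (subst sum.atMost_Suc_shift) simp
    also have "\<dots> = (\<Sum>i\<le>k. of_nat (k choose i) * g i (Suc k - i))"
      by (subst sum.atMost_Suc) (simp add: binomial_eq_0)
    finally show ?thesis .
  qed
  have "(\<Sum>i\<le>Suc k. of_nat (Suc k choose i) * g i (Suc k - i)) =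
      g 0 (Suc k) + (\<Sum>i\<le>k. of_nat (Suc k choose Suc i) * g (Suc i) (k - i))"
    by (subst sum.atMost_Suc_shift) simp
  also have "\<dots> = (\<Sum>i\<le>k. of_nat (k choose i) * g (Suc i) (k - i)) +
      (g 0 (Suc k) + (\<Sum>i\<le>k. of_nat (k choose Suc i) * g (Suc i) (k - i)))"
    by (simp add: sum.distrib distrib_right add_ac)
  finally show ?thesis
    by (simp add: shift sum.distrib distrib_left)
qed

lemma skron_mult_skron_one:
  assumes "X \<in> carrier_mat n n" "Y \<in> carrier_mat n n" "A \<in> carrier_mat n n"
  shows "skron X Y * skron (1\<^sub>m n) A = (1 / 2) \<cdot>\<^sub>m (skron X (Y * A) + skron (X * A) Y)"
  using skron_mult[OF assms(1,2) one_carrier_mat assms(3)] assms by simp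

lemma skron_one_pow_entry:
  assumes A: "A \<in> carrier_mat n n" and l: "l < tri n"
  shows "l' < tri n \<Longrightarrow> (skron (1\<^sub>m n) A ^\<^sub>m k) $$ (l, l') =
    (1 / 2 ^ k) * (\<Sum>i\<le>k. real (k choose i) * skron (A ^\<^sub>m (k - i)) (A ^\<^sub>m i) $$ (l, l'))"
proof (induction k arbitrary: l')
  case 0
  then show ?case
    using A skron_one_one[of n] skron_carrier[of "1\<^sub>m n" n A] by simp
next
  case (Suc k)
  let ?S = "skron (1\<^sub>m n) A"
  let ?T = "\<lambda>i. skron (A ^\<^sub>m (k - i)) (A ^\<^sub>m i)"
  let ?g = "\<lambda>i j. skron (A ^\<^sub>m j) (A ^\<^sub>m i) $$ (l, l')"
  have S: "?S \<in> carrier_mat (tri n) (tri n)" and T: "?T i \<in> carrier_mat (tri n) (tri n)" for i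
    using A by (auto intro: skron_carrier)
  have "(?S ^\<^sub>m Suc k) $$ (l, l') = (\<Sum>m<tri n. (?S ^\<^sub>m k) $$ (l, m) * ?S $$ (m, l'))"
    using S l Suc.prems by (simp add: index_mult_mat_sum[of _ "tri n" "tri n" _ "tri n"] del: index_mult_mat)
  also have "\<dots> = (1 / 2 ^ k) * (\<Sum>i\<le>k. real (k choose i) * (?T i * ?S) $$ (l, l'))"
    using S T l Suc.prems
    by (simp add: Suc.IH index_mult_mat_sum[of _ "tri n" "tri n" _ "tri n"] sum_distrib_left
        sum_distrib_right sum.swap[of _ "{..<tri n}"] mult_ac del: index_mult_mat)
  also have "\<dots> = (1 / 2 ^ k) * (\<Sum>i\<le>k. real (k choose i) * ((?g (Suc i) (k - i) + ?g i (Suc k - i)) / 2))"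
  proof -
    have "(?T i * ?S) $$ (l, l') = (?g (Suc i) (k - i) + ?g i (Suc k - i)) / 2" if "i \<le> k" for i
      using A l Suc.prems that
      by (simp add: skron_mult_skron_one Suc_diff_le skron_dim carrier_matD[OF A])
    then show ?thesis
      by (intro arg_cong[where f = "\<lambda>x. (1 / 2 ^ k) * x"] sum.cong refl) (simp only: atMost_iff)
  qed
  also have "\<dots> = (1 / 2 ^ Suc k) * (\<Sum>i\<le>k. real (k choose i) * (?g (Suc i) (k - i) + ?g i (Suc k - i)))"
  proof -
    have half: "(\<Sum>i\<le>k. real (k choose i) * ((?g (Suc i) (k - i) + ?g i (Suc k - i)) / 2)) =
        (\<Sum>i\<le>k. real (k choose i) * (?g (Suc i) (k - i) + ?g i (Suc k - i))) / 2"
      by (simp add: sum_divide_distrib)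
    show ?thesis
      unfolding half by simp
  qed
  also have "\<dots> = (1 / 2 ^ Suc k) * (\<Sum>i\<le>Suc k. real (Suc k choose i) * ?g i (Suc k - i))"
    using binomial_sum_Suc[of k ?g] by simp
  finally show ?case .
qed

lemma skron_one_pow:
  assumes A: "A \<in> carrier_mat n n"
  shows "skron (1\<^sub>m n) A ^\<^sub>m k = (1 / 2 ^ k) \<cdot>\<^sub>m
    msum (tri n) (\<lambda>i. real (k choose i) \<cdot>\<^sub>m skron (A ^\<^sub>m (k - i)) (A ^\<^sub>m i)) {0..k}"
proof (rule eq_matI)
  fix l l' assume "l < dim_row ((1 / 2 ^ k) \<cdot>\<^sub>m
      msum (tri n) (\<lambda>i. real (k choose i) \<cdot>\<^sub>m skron (A ^\<^sub>m (k - i)) (A ^\<^sub>m i)) {0..k})"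
    "l' < dim_col ((1 / 2 ^ k) \<cdot>\<^sub>m
      msum (tri n) (\<lambda>i. real (k choose i) \<cdot>\<^sub>m skron (A ^\<^sub>m (k - i)) (A ^\<^sub>m i)) {0..k})"
  then have "l < tri n" "l' < tri n"
    by (simp_all add: msum_def)
  then show "(skron (1\<^sub>m n) A ^\<^sub>m k) $$ (l, l') = ((1 / 2 ^ k) \<cdot>\<^sub>m
      msum (tri n) (\<lambda>i. real (k choose i) \<cdot>\<^sub>m skron (A ^\<^sub>m (k - i)) (A ^\<^sub>m i)) {0..k}) $$ (l, l')"
    using A by (simp add: skron_one_pow_entry msum_def skron_dim carrier_matD(1) atLeast0AtMost)
qed (simp_all add: msum_def skron_dim)

lemma ssum_self:
  assumes A: "A \<in> carrier_mat n n"
  shows "ssum A A = 2 \<cdot>\<^sub>m skron (1\<^sub>m n) A"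
  using A skron_carrier[OF A, of "1\<^sub>m n"]
  by (intro eq_matI) (auto simp: ssum_def skron_commute[OF A one_carrier_mat] skron_dim)

lemma pow_smult_mat:
  fixes A :: "'a :: comm_semiring_1 mat"
  assumes A: "A \<in> carrier_mat n n"
  shows "(c \<cdot>\<^sub>m A) ^\<^sub>m k = c ^ k \<cdot>\<^sub>m (A ^\<^sub>m k)"
proof (induction k)
  case 0
  show ?case using A by (intro eq_matI) auto
next
  case (Suc k)
  have "(c \<cdot>\<^sub>m A) ^\<^sub>m Suc k = c ^ k \<cdot>\<^sub>m (A ^\<^sub>m k) * (c \<cdot>\<^sub>m A)"
    by (simp add: Suc.IH)
  also have "\<dots> = c \<cdot>\<^sub>m (c ^ k \<cdot>\<^sub>m (A ^\<^sub>m k * A))"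
    using A by (simp add: mult_smult_assoc_mat[of _ n n] mult_smult_distrib[of _ n n])
  also have "\<dots> = c ^ Suc k \<cdot>\<^sub>m (A ^\<^sub>m Suc k)"
    by (intro eq_matI) (auto simp: mult.assoc)
  finally show ?case .
qed

lemma abs_pow_mat_entry_le:
  fixes A :: "real mat"
  assumes A: "A \<in> carrier_mat n n" and a: "a < n"
  shows "c < n \<Longrightarrow> \<bar>(A ^\<^sub>m k) $$ (a, c)\<bar> \<le> (\<Sum>i<n. \<Sum>j<n. \<bar>A $$ (i, j)\<bar>) ^ k"
proof (induction k arbitrary: c)
  case 0
  then show ?case using A a by simp
next
  case (Suc k)
  let ?M = "\<Sum>i<n. \<Sum>j<n. \<bar>A $$ (i, j)\<bar>"
  have col_le: "(\<Sum>m<n. \<bar>A $$ (m, c)\<bar>) \<le> ?M"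
    using Suc.prems by (intro sum_mono member_le_sum[of c "{..<n}" "\<lambda>j. \<bar>A $$ (_, j)\<bar>"]) auto
  have "(A ^\<^sub>m Suc k) $$ (a, c) = (\<Sum>m<n. (A ^\<^sub>m k) $$ (a, m) * A $$ (m, c))"
    using A a Suc.prems by (simp add: index_mult_mat_sum[of _ n n _ n] del: index_mult_mat)
  then have "\<bar>(A ^\<^sub>m Suc k) $$ (a, c)\<bar> \<le> (\<Sum>m<n. \<bar>(A ^\<^sub>m k) $$ (a, m)\<bar> * \<bar>A $$ (m, c)\<bar>)"
    by (simp add: sum_abs[THEN order_trans] abs_mult)
  also have "\<dots> \<le> (\<Sum>m<n. ?M ^ k * \<bar>A $$ (m, c)\<bar>)"
    using Suc.IH by (intro sum_mono mult_right_mono) auto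
  also have "\<dots> \<le> ?M ^ k * ?M"
    using col_le by (simp add: sum_distrib_left[symmetric] mult_left_mono sum_nonneg)
  finally show ?case by (simp add: mult.commute)
qed

lemma summable_pow_mat_entry:
  fixes A :: "real mat"
  assumes "A \<in> carrier_mat n n" "a < n" "c < n"
  shows "summable (\<lambda>k. norm ((A ^\<^sub>m k) $$ (a, c) / fact k))"
proof (rule summable_comparison_test)
  let ?M = "\<Sum>i<n. \<Sum>j<n. \<bar>A $$ (i, j)\<bar>"
  show "summable (\<lambda>k. inverse (fact k) * ?M ^ k)"
    by (rule summable_exp)
  show "\<exists>N. \<forall>k\<ge>N. norm (norm ((A ^\<^sub>m k) $$ (a, c) / fact k)) \<le> inverse (fact k) * ?M ^ k"
  proof (intro exI allI impI)
    fix k :: nat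
    have "\<bar>(A ^\<^sub>m k) $$ (a, c)\<bar> / fact k \<le> ?M ^ k / fact k"
      using abs_pow_mat_entry_le[OF assms] by (intro divide_right_mono) auto
    moreover have "norm (norm ((A ^\<^sub>m k) $$ (a, c) / fact k)) = \<bar>(A ^\<^sub>m k) $$ (a, c)\<bar> / fact k"
      by simp
    moreover have "inverse (fact k) * ?M ^ k = ?M ^ k / fact k"
      by (simp add: divide_inverse mult.commute)
    ultimately show "norm (norm ((A ^\<^sub>m k) $$ (a, c) / fact k)) \<le> inverse (fact k) * ?M ^ k"
      by simp
  qed
qed

lemma pow_ssum_self_entry:
  fixes A :: "real mat"
  assumes A: "A \<in> carrier_mat n n" and l: "l < tri n" "l' < tri n"
  shows "((ssum A A) ^\<^sub>m k) $$ (l, l') / fact k =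
    (\<Sum>a<n. \<Sum>b<n. \<Sum>c<n. \<Sum>d<n. sym_basis n l $$ (a, b) * sym_basis n l' $$ (c, d) *
       (\<Sum>i\<le>k. ((A ^\<^sub>m i) $$ (a, c) / fact i) * ((A ^\<^sub>m (k - i)) $$ (b, d) / fact (k - i))))"
proof -
  let ?e = "sym_basis n l" and ?E = "sym_basis n l'"
  have S: "skron (1\<^sub>m n) A ^\<^sub>m k \<in> carrier_mat (tri n) (tri n)"
    using skron_carrier[of "1\<^sub>m n" n A] by simp
  have "((ssum A A) ^\<^sub>m k) $$ (l, l') / fact k =
      (\<Sum>i\<le>k. real (k choose i) / fact k * skron (A ^\<^sub>m (k - i)) (A ^\<^sub>m i) $$ (l, l'))"
    using A l carrier_matD[OF S]
    by (simp add: ssum_self pow_smult_mat[of _ "tri n"] skron_carrier skron_one_pow_entry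
        sum_divide_distrib sum_distrib_left)
  also have "\<dots> = (\<Sum>i\<le>k. \<Sum>a<n. \<Sum>b<n. \<Sum>c<n. \<Sum>d<n. ?e $$ (a, b) * ?E $$ (c, d) *
       (((A ^\<^sub>m i) $$ (a, c) / fact i) * ((A ^\<^sub>m (k - i)) $$ (b, d) / fact (k - i))))"
  proof (rule sum.cong[OF refl])
    fix i assume "i \<in> {..k}"
    then have i: "i \<le> k" by simp
    then have "real (k choose i) / fact k = 1 / (fact i * fact (k - i))"
      using binomial_fact[of i k, where 'a = real] by (simp add: field_simps)
    then show "real (k choose i) / fact k * skron (A ^\<^sub>m (k - i)) (A ^\<^sub>m i) $$ (l, l') =
        (\<Sum>a<n. \<Sum>b<n. \<Sum>c<n. \<Sum>d<n. ?e $$ (a, b) * ?E $$ (c, d) *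
          (((A ^\<^sub>m i) $$ (a, c) / fact i) * ((A ^\<^sub>m (k - i)) $$ (b, d) / fact (k - i))))"
      using A l i by (simp add: skron_entry_sum[of _ n] sum_distrib_left field_simps)
  qed
  also have "\<dots> = (\<Sum>a<n. \<Sum>b<n. \<Sum>c<n. \<Sum>d<n. ?e $$ (a, b) * ?E $$ (c, d) *
       (\<Sum>i\<le>k. ((A ^\<^sub>m i) $$ (a, c) / fact i) * ((A ^\<^sub>m (k - i)) $$ (b, d) / fact (k - i))))"
    by (simp only: sum.swap[of _ "{..k}"] sum_distrib_left)
  finally show ?thesis .
qed

lemma mexp_ssum_self:
  fixes A :: "real mat"
  assumes A: "A \<in> carrier_mat n n"
  shows "mexp (ssum A A) = skron (mexp A) (mexp A)"
proof (rule eq_matI)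
  have eA: "mexp A \<in> carrier_mat n n"
    using A by (simp add: mexp_def)
  have SS: "ssum A A \<in> carrier_mat (tri n) (tri n)"
    using A skron_carrier[of "1\<^sub>m n" n A] by (simp add: ssum_self)
  fix l l' assume "l < dim_row (skron (mexp A) (mexp A))" "l' < dim_col (skron (mexp A) (mexp A))"
  then have l: "l < tri n" "l' < tri n"
    using skron_carrier[OF eA, of "mexp A"] by auto
  let ?e = "sym_basis n l" and ?E = "sym_basis n l'"
  let ?\<alpha> = "\<lambda>a c i. (A ^\<^sub>m i) $$ (a, c) / fact i"
  have "(\<lambda>k. ((ssum A A) ^\<^sub>m k) $$ (l, l') / fact k) sums
      (\<Sum>a<n. \<Sum>b<n. \<Sum>c<n. \<Sum>d<n. ?e $$ (a, b) * ?E $$ (c, d) * (suminf (?\<alpha> a c) * suminf (?\<alpha> b d)))"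
    unfolding pow_ssum_self_entry[OF A l]
    using A by (intro sums_sum sums_mult Cauchy_product_sums summable_pow_mat_entry) auto
  then have "mexp (ssum A A) $$ (l, l') =
      (\<Sum>a<n. \<Sum>b<n. \<Sum>c<n. \<Sum>d<n. ?e $$ (a, b) * ?E $$ (c, d) * (suminf (?\<alpha> a c) * suminf (?\<alpha> b d)))"
    using SS l by (simp add: mexp_def sums_iff)
  also have "\<dots> = skron (mexp A) (mexp A) $$ (l, l')"
    unfolding skron_entry_sum[OF eA eA l] using A by (intro sum.cong refl) (simp add: mexp_def mult_ac)
  finally show "mexp (ssum A A) $$ (l, l') = skron (mexp A) (mexp A) $$ (l, l')" .
qed (use A in \<open>simp_all add: mexp_def ssum_def skron_dim\<close>)

section \<open>A counterexample with a nilpotent summand\<close>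

lemma pow_mat_square_zero:
  fixes M :: "'a :: semiring_1 mat"
  assumes M: "M \<in> carrier_mat n n" and MM: "M * M = 0\<^sub>m n n"
  shows "M ^\<^sub>m Suc (Suc j) = 0\<^sub>m n n"
proof (induction j)
  case 0
  show ?case using M MM by simp
next
  case (Suc j)
  then show ?case using M by simp
qed

lemma mexp_square_zero:
  fixes M :: "real mat"
  assumes M: "M \<in> carrier_mat n n" and MM: "M * M = 0\<^sub>m n n"
  shows "mexp M = 1\<^sub>m n + M"
proof (rule eq_matI)
  fix i j assume "i < dim_row (1\<^sub>m n + M)" "j < dim_col (1\<^sub>m n + M)"
  then have ij: "i < n" "j < n" using M by auto
  have "(\<lambda>k. (M ^\<^sub>m k) $$ (i, j) / fact k) sums (\<Sum>k<2. (M ^\<^sub>m k) $$ (i, j) / fact k)"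
  proof (rule sums_finite)
    fix k :: nat assume "k \<notin> {..<2}"
    then obtain m where "k = Suc (Suc m)" by (metis add_2_eq_Suc' le_add_diff_inverse2 lessThan_iff not_less)
    then show "(M ^\<^sub>m k) $$ (i, j) / fact k = 0"
      using pow_mat_square_zero[OF M MM] ij by simp
  qed simp
  then show "mexp M $$ (i, j) = (1\<^sub>m n + M) $$ (i, j)"
    using M ij by (simp add: mexp_def sums_iff numeral_2_eq_2)
qed (use M in \<open>simp_all add: mexp_def\<close>)

lemma skron_entry_0_2:
  assumes X: "X \<in> carrier_mat 2 2" and Y: "Y \<in> carrier_mat 2 2"
  shows "skron X Y $$ (0, 2) = X $$ (0, 1) * Y $$ (0, 1)"
proof -
  have pairs: "sym_pairs 2 = [(0, 0), (0, 1), (1, 1)]"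
    by (simp add: sym_pairs_def upt_rec)
  have "sym_basis 2 0 = mat 2 2 (\<lambda>(a, b). if a = 0 \<and> b = 0 then 1 else 0)"
    "sym_basis 2 2 = mat 2 2 (\<lambda>(a, b). if a = 1 \<and> b = 1 then 1 else 0)"
    by (simp_all add: sym_basis_def pairs)
  moreover have "0 < tri 2" "2 < tri 2"
    by (simp_all add: tri_def)
  ultimately show ?thesis
    using X Y by (simp add: skron_entry_sum[of _ 2] numeral_2_eq_2 lessThan_Suc)
qed

lemma ssum_zero_right:
  assumes A: "A \<in> carrier_mat n n"
  shows "ssum A (0\<^sub>m n n) = skron (1\<^sub>m n) A"
  using A skron_carrier[OF one_carrier_mat, of n A]
  by (simp add: ssum_def skron_commute[OF A one_carrier_mat] skron_zero_right)

lemma mexp_ssum_neq_skron_mexp: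
  "\<exists>(n::nat) (A::real mat) (B::real mat). A \<in> carrier_mat n n \<and> B \<in> carrier_mat n n \<and>
     mexp (ssum A B) \<noteq> skron (mexp A) (mexp B)"
proof -
  define N :: "real mat" where "N = mat 2 2 (\<lambda>(i, j). if i = 0 \<and> j = 1 then 1 else 0)"
  have N: "N \<in> carrier_mat 2 2" and hN: "(1 / 2) \<cdot>\<^sub>m N \<in> carrier_mat 2 2"
    by (simp_all add: N_def)
  have NN: "N * N = 0\<^sub>m 2 2" and hNN: "((1 / 2) \<cdot>\<^sub>m N) * ((1 / 2) \<cdot>\<^sub>m N) = 0\<^sub>m 2 2"
    by (rule eq_matI; auto simp: N_def scalar_prod_def numeral_2_eq_2)+
  have "ssum N (0\<^sub>m 2 2) = 2 \<cdot>\<^sub>m ((1 / 2) \<cdot>\<^sub>m skron (1\<^sub>m 2) N)"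
    using N skron_carrier[OF one_carrier_mat, of 2 N] by (intro eq_matI) (auto simp: ssum_zero_right)
  also have "\<dots> = ssum ((1 / 2) \<cdot>\<^sub>m N) ((1 / 2) \<cdot>\<^sub>m N)"
    by (simp add: ssum_self[OF hN] skron_smult_right[OF one_carrier_mat N])
  finally have "ssum N (0\<^sub>m 2 2) = ssum ((1 / 2) \<cdot>\<^sub>m N) ((1 / 2) \<cdot>\<^sub>m N)" .
  then have "mexp (ssum N (0\<^sub>m 2 2)) = skron (1\<^sub>m 2 + (1 / 2) \<cdot>\<^sub>m N) (1\<^sub>m 2 + (1 / 2) \<cdot>\<^sub>m N)"
    using mexp_ssum_self[OF hN] mexp_square_zero[OF hN hNN] by simp
  moreover have "skron (mexp N) (mexp (0\<^sub>m 2 2)) = skron (1\<^sub>m 2 + N) (1\<^sub>m 2 + 0\<^sub>m 2 2)"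
    using mexp_square_zero[OF N NN] mexp_square_zero[of "0\<^sub>m 2 2" 2]
    by simp
  ultimately have "mexp (ssum N (0\<^sub>m 2 2)) \<noteq> skron (mexp N) (mexp (0\<^sub>m 2 2))"
    using N by (auto dest!: arg_cong[where f = "\<lambda>M. M $$ (0, 2)"] simp: skron_entry_0_2 N_def)
  then show ?thesis
    using N zero_carrier_mat by blast
qed

theorem proposition8:
  shows "(\<forall>(n::nat) (A::real mat) (k::nat). A \<in> carrier_mat n n \<longrightarrow>
            (skron A (1\<^sub>m n)) ^\<^sub>m k = (skron (1\<^sub>m n) A) ^\<^sub>m k \<and>
            (skron (1\<^sub>m n) A) ^\<^sub>m k =
              (1 / 2 ^ k) \<cdot>\<^sub>m msum (tri n)
                 (\<lambda>i. real (k choose i) \<cdot>\<^sub>m skron (A ^\<^sub>m (k - i)) (A ^\<^sub>m i)) {0..k})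
       \<and> (\<forall>(n::nat) (A::real mat). A \<in> carrier_mat n n \<longrightarrow>
            mexp (ssum A A) = skron (mexp A) (mexp A))
       \<and> (\<exists>(n::nat) (A::real mat) (B::real mat). A \<in> carrier_mat n n \<and> B \<in> carrier_mat n n \<and>
            mexp (ssum A B) \<noteq> skron (mexp A) (mexp B))"
proof (intro conjI allI impI)
  fix n k :: nat and A :: "real mat"
  assume "A \<in> carrier_mat n n"
  then show "skron A (1\<^sub>m n) ^\<^sub>m k = skron (1\<^sub>m n) A ^\<^sub>m k"
    by (simp add: skron_commute[of A n "1\<^sub>m n"])
next
  fix n k :: nat and A :: "real mat"
  assume "A \<in> carrier_mat n n"
  then show "skron (1\<^sub>m n) A ^\<^sub>m k = (1 / 2 ^ k) \<cdot>\<^sub>m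
      msum (tri n) (\<lambda>i. real (k choose i) \<cdot>\<^sub>m skron (A ^\<^sub>m (k - i)) (A ^\<^sub>m i)) {0..k}"
    by (rule skron_one_pow)
next
  fix n :: nat and A :: "real mat"
  assume "A \<in> carrier_mat n n"
  then show "mexp (ssum A A) = skron (mexp A) (mexp A)"
    by (rule mexp_ssum_self)
qed (rule mexp_ssum_neq_skron_mexp)

end
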